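(* Let $\mathcal{G}$ be an input-total system. If $\mathcal{G}\models\mathit{stratNI}$, then $\mathcal{G}\models\mathit{GNI}$, where $\mathit{stratNI}:=\forall\pi_1.\langle\langle\{\xi_N\}\rangle\rangle\pi_2.\ \square\big(\bigwedge_{a\in O}a_{\pi_1}\leftrightarrow a_{\pi_2}\big)$ and $\mathit{GNI}:=\forall\pi_1.\forall\pi_2.\exists\pi_3.\ \square\big(\bigwedge_{a\in H}a_{\pi_1}\leftrightarrow a_{\pi_3}\big)\wedge\square\big(\bigwedge_{a\in O}a_{\pi_2}\leftrightarrow a_{\pi_3}\big)$.
   Context: A multi-stage concurrent game structure (MSCGS) is $\mathcal{G}=(S,s_0,\Xi,\mathscr{M},\delta,d,\mathbf{AP},\ell)$: finite states $S$, initial state $s_0$, finite agents $\Xi$, finite moves $\mathscr{M}$, transition function $\delta:S\times(\Xi\to\mathscr{M})\to S$, stage function $d:\Xi\to\mathbb{N}$, atomic propositions $\mathbf{AP}$, labelling $\ell:S\to2^{\mathbf{AP}}$. A system here is an MSCGS with agents $\xi_N$ (resolving non-determinism), $\xi_H$ (choosing high-security inputs) and $\xi_L$ (choosing low-security inputs), where $\mathbf{AP}$ contains pairwise disjoint sets $H$ (high inputs), $L$ (low inputs) and $O$ (outputs), and the move of $\xi_H$ (resp. $\xi_L$) determines the values of the propositions in $H$ (resp. $L$) in the next state. The system is input-total if in each state $\xi_H$ and $\xi_L$ can choose every possible valuation of their input propositions. Semantics of $\texttt{HyperATL}^*$ used here: a strategy for agent $\xi$ is $f_\xi:S^+\times(\{\xi'\mid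 d(\xi')<d(\xi)\}\to\mathscr{M})\to\mathscr{M}$; for $A\subseteq\Xi$, strategies $F_A$ and state $s$, $\mathit{out}(\mathcal{G},s,F_A)$ is the set of $u\in S^\omega$ with $u(0)=s$ such that for all $i$ there is a global move vector $\sigma$ with $\delta(u(i),\sigma)=u(i+1)$ and $\sigma(\xi)=f_\xi(u[0,i],\sigma_{\mid\{\xi'\mid d(\xi')<d(\xi)\}})$ for all $\xi\in A$. For a path assignment $\Pi$, $\Pi\models\langle\langle A\rangle\rangle\pi.\varphi$ iff there exist $F_A$ such that for all $t\in\mathit{out}(\mathcal{G},\Pi(\epsilon)(0),F_A)$, $\Pi[\pi\mapsto t]\models\varphi$, where $\Pi(\epsilon)$ is the most recently added path ($\Pi(\epsilon)(0)=s_0$ if $\Pi$ is empty); $\forall\pi=\langle\langle\emptyset\rangle\rangle\pi$, $\exists\pi=\langle\langle\Xi\rangle\rangle\pi$; $a_\pi$ holds iff $a\in\ell$ of the current state of the path bound to $\pi$; temporal operators are interpreted synchronously on all paths. $\mathcal{G}\models\varphi$ iff the empty assignment satisfies $\varphi$. *)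

theory Defs
  imports Main
begin

text \<open>Agents of a system: the nondeterminism agent, the high-input agent, the low-input agent.\<close>
datatype agent = XiN | XiH | XiL

record ('s, 'm, 'a) mscgs =
  St    :: "'s set"
  init  :: "'s"
  Mv    :: "'m set"
  delta :: "'s \<Rightarrow> (agent \<Rightarrow> 'm) \<Rightarrow> 's"
  stage :: "agent \<Rightarrow> nat"
  AP    :: "'a set"
  lab   :: "'s \<Rightarrow> 'a set"

definition move_vec :: "('s, 'm, 'a) mscgs \<Rightarrow> (agent \<Rightarrow> 'm) \<Rightarrow> bool" where
  "move_vec G \<sigma> \<longleftrightarrow> (\<forall>\<xi>. \<sigma> \<xi> \<in> Mv G)"

definition wf_mscgs :: "('s, 'm, 'a) mscgs \<Rightarrow> bool" where
  "wf_mscgs G \<longleftrightarrow> finite (St G) \<and> init G \<in> St G \<and> finite (Mv G) \<and> Mv G \<noteq> {}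
     \<and> finite (AP G)
     \<and> (\<forall>s \<in> St G. \<forall>\<sigma>. move_vec G \<sigma> \<longrightarrow> delta G s \<sigma> \<in> St G)
     \<and> (\<forall>s \<in> St G. lab G s \<subseteq> AP G)"

definition restr :: "('s, 'm, 'a) mscgs \<Rightarrow> agent \<Rightarrow> (agent \<Rightarrow> 'm) \<Rightarrow> (agent \<Rightarrow> 'm option)" where
  "restr G \<xi> \<sigma> = (\<lambda>\<xi>'. if stage G \<xi>' < stage G \<xi> then Some (\<sigma> \<xi>') else None)"

text \<open>A strategy maps a nonempty history (list of states) and the moves of lower-stage agents to a move.\<close>
type_synonym ('s, 'm) strat = "'s list \<Rightarrow> (agent \<Rightarrow> 'm option) \<Rightarrow> 'm"

definition is_strategy :: "('s, 'm, 'a) mscgs \<Rightarrow> ('s, 'm) strat \<Rightarrow> bool" where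
  "is_strategy G f \<longleftrightarrow> (\<forall>h r. f h r \<in> Mv G)"

definition out :: "('s, 'm, 'a) mscgs \<Rightarrow> 's \<Rightarrow> (agent \<Rightarrow> ('s, 'm) strat) \<Rightarrow> agent set
                   \<Rightarrow> (nat \<Rightarrow> 's) set" where
  "out G s F A = {u. u 0 = s \<and> (\<forall>i. u i \<in> St G) \<and>
      (\<forall>i. \<exists>\<sigma>. move_vec G \<sigma> \<and> delta G (u i) \<sigma> = u (Suc i) \<and>
             (\<forall>\<xi> \<in> A. \<sigma> \<xi> = F \<xi> (map u [0..<Suc i]) (restr G \<xi> \<sigma>)))}"

text \<open>Semantics of the strategy quantifier  <<A>> pi. phi, started at state s (the first
  state of the most recently added path); P describes phi as a predicate of the new path.\<close>
definition strat_q :: "('s, 'm, 'a) mscgs \<Rightarrow> agent set \<Rightarrow> 's \<Rightarrow> ((nat \<Rightarrow> 's) \<Rightarrow> bool) \<Rightarrow> bool" where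
  "strat_q G A s P \<longleftrightarrow> (\<exists>F. (\<forall>\<xi> \<in> A. is_strategy G (F \<xi>)) \<and> (\<forall>t \<in> out G s F A. P t))"

abbreviation all_path where "all_path G s P \<equiv> strat_q G {} s P"
abbreviation ex_path where "ex_path G s P \<equiv> strat_q G UNIV s P"

definition glob_agree :: "('s, 'm, 'a) mscgs \<Rightarrow> 'a set \<Rightarrow> (nat \<Rightarrow> 's) \<Rightarrow> (nat \<Rightarrow> 's) \<Rightarrow> bool" where
  "glob_agree G X t t' \<longleftrightarrow> (\<forall>i. \<forall>a \<in> X. a \<in> lab G (t i) \<longleftrightarrow> a \<in> lab G (t' i))"

definition is_system :: "('s, 'm, 'a) mscgs \<Rightarrow> 'a set \<Rightarrow> 'a set \<Rightarrow> 'a set \<Rightarrow> bool" where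
  "is_system G H L Ou \<longleftrightarrow> wf_mscgs G \<and> H \<subseteq> AP G \<and> L \<subseteq> AP G \<and> Ou \<subseteq> AP G
     \<and> H \<inter> L = {} \<and> H \<inter> Ou = {} \<and> L \<inter> Ou = {}
     \<and> (\<forall>s \<in> St G. \<forall>\<sigma> \<sigma>'. move_vec G \<sigma> \<longrightarrow> move_vec G \<sigma>' \<longrightarrow> \<sigma> XiH = \<sigma>' XiH
           \<longrightarrow> lab G (delta G s \<sigma>) \<inter> H = lab G (delta G s \<sigma>') \<inter> H)
     \<and> (\<forall>s \<in> St G. \<forall>\<sigma> \<sigma>'. move_vec G \<sigma> \<longrightarrow> move_vec G \<sigma>' \<longrightarrow> \<sigma> XiL = \<sigma>' XiL
           \<longrightarrow> lab G (delta G s \<sigma>) \<inter> L = lab G (delta G s \<sigma>') \<inter> L)"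

definition input_total :: "('s, 'm, 'a) mscgs \<Rightarrow> 'a set \<Rightarrow> 'a set \<Rightarrow> bool" where
  "input_total G H L \<longleftrightarrow>
     (\<forall>s \<in> St G. \<forall>V \<subseteq> H. \<exists>m \<in> Mv G. \<forall>\<sigma>. move_vec G \<sigma> \<longrightarrow> \<sigma> XiH = m
           \<longrightarrow> lab G (delta G s \<sigma>) \<inter> H = V)
   \<and> (\<forall>s \<in> St G. \<forall>V \<subseteq> L. \<exists>m \<in> Mv G. \<forall>\<sigma>. move_vec G \<sigma> \<longrightarrow> \<sigma> XiL = m
           \<longrightarrow> lab G (delta G s \<sigma>) \<inter> L = V)"

definition stratNI :: "('s, 'm, 'a) mscgs \<Rightarrow> 'a set \<Rightarrow> bool" where
  "stratNI G Ou \<longleftrightarrow> all_path G (init G) (\<lambda>t1. strat_q G {XiN} (t1 0) (\<lambda>t2. glob_agree G Ou t1 t2))"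

definition GNI :: "('s, 'm, 'a) mscgs \<Rightarrow> 'a set \<Rightarrow> 'a set \<Rightarrow> bool" where
  "GNI G H Ou \<longleftrightarrow> all_path G (init G) (\<lambda>t1. all_path G (t1 0) (\<lambda>t2. ex_path G (t2 0)
      (\<lambda>t3. glob_agree G H t1 t3 \<and> glob_agree G Ou t2 t3)))"

end

theory Submission
  imports Defs
begin

text \<open>Given paths t1 and t2, the witness t3 is produced by a joint strategy profile: the
  nondeterminism agent plays the strategy that stratNI provides for t2, so every outcome agrees
  with t2 on the outputs, while the high-input agent uses input totality to reproduce at every
  step the high inputs of t1. Fixing more agents only shrinks the set of outcomes, so the
  outcomes of the joint profile inherit both properties.\<close>

lemma out_start: "t \<in> out G s F A \<Longrightarrow> t 0 = s"
  by (simp add: out_def)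

lemma out_antimono:
  assumes "A \<subseteq> B" and "\<And>\<xi>. \<xi> \<in> A \<Longrightarrow> F \<xi> = F' \<xi>"
  shows "out G s F' B \<subseteq> out G s F A"
proof
  fix u assume "u \<in> out G s F' B"
  then show "u \<in> out G s F A"
    using assms unfolding out_def by (simp (no_asm_use)) (metis subsetD)
qed

lemma all_path_iff: "all_path G s P \<longleftrightarrow> (\<forall>t \<in> out G s F {}. P t)"
  by (simp add: strat_q_def out_def)

lemma glob_agree_iff_Int:
  "glob_agree G X t t' \<longleftrightarrow> (\<forall>i. lab G (t i) \<inter> X = lab G (t' i) \<inter> X)"
  unfolding glob_agree_def by blast

lemma strategy_exists: "Mv G \<noteq> {} \<Longrightarrow> \<exists>f. is_strategy G f"
  by (auto simp: is_strategy_def)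

lemma input_total_high_move:
  assumes "input_total G H L" and "s \<in> St G" and "V \<subseteq> H"
  obtains m where "m \<in> Mv G"
    and "\<And>\<sigma>. move_vec G \<sigma> \<Longrightarrow> \<sigma> XiH = m \<Longrightarrow> lab G (delta G s \<sigma>) \<inter> H = V"
  using assms unfolding input_total_def by meson

lemma input_total_high_tracking_strategy:
  assumes "input_total G H L" and "Mv G \<noteq> {}" and "\<And>i. V i \<subseteq> H"
  obtains f where "is_strategy G f"
    and "\<And>F A t i. XiH \<in> A \<Longrightarrow> F XiH = f \<Longrightarrow> t \<in> out G s F A
           \<Longrightarrow> lab G (t (Suc i)) \<inter> H = V (Suc i)"
proof -
  have "\<exists>m \<in> Mv G. last h \<in> St G \<longrightarrow> (\<forall>\<sigma>. move_vec G \<sigma> \<longrightarrow> \<sigma> XiH = m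
          \<longrightarrow> lab G (delta G (last h) \<sigma>) \<inter> H = V (length h))" for h
  proof (cases "last h \<in> St G")
    case True
    then show ?thesis
      using input_total_high_move[OF assms(1) True assms(3)] by blast
  qed (use assms(2) in blast)
  then obtain f0 where f0: "\<And>h. f0 h \<in> Mv G"
    "\<And>h \<sigma>. last h \<in> St G \<Longrightarrow> move_vec G \<sigma> \<Longrightarrow> \<sigma> XiH = f0 h
       \<Longrightarrow> lab G (delta G (last h) \<sigma>) \<inter> H = V (length h)"
    by metis
  show thesis
  proof
    show "is_strategy G (\<lambda>h r. f0 h)"
      using f0(1) by (simp add: is_strategy_def)
  next
    fix F A t i
    assume "XiH \<in> A" "F XiH = (\<lambda>h r. f0 h)" and t: "t \<in> out G s F A"
    then obtain \<sigma> where \<sigma>: "move_vec G \<sigma>" "delta G (t i) \<sigma> = t (Suc i)"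
      "\<sigma> XiH = f0 (map t [0..<Suc i])"
      unfolding out_def by fastforce
    have "t i \<in> St G"
      using t by (simp add: out_def)
    then show "lab G (t (Suc i)) \<inter> H = V (Suc i)"
      using f0(2)[of "map t [0..<Suc i]" \<sigma>] \<sigma> by simp
  qed
qed

lemma ex_path_high_and_output_agreement:
  assumes "input_total G H L" and "Mv G \<noteq> {}" and "t1 0 = s"
    and "strat_q G {XiN} s (glob_agree G Ou t2)"
  shows "ex_path G s (\<lambda>t3. glob_agree G H t1 t3 \<and> glob_agree G Ou t2 t3)"
proof -
  obtain FN where FN: "is_strategy G (FN XiN)" "\<forall>t \<in> out G s FN {XiN}. glob_agree G Ou t2 t"
    using assms(4) unfolding strat_q_def by blast
  obtain fH where fH: "is_strategy G fH"
    and track: "\<And>F A t i. XiH \<in> A \<Longrightarrow> F XiH = fH \<Longrightarrow> t \<in> out G s F A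
      \<Longrightarrow> lab G (t (Suc i)) \<inter> H = lab G (t1 (Suc i)) \<inter> H"
    using input_total_high_tracking_strategy[OF assms(1,2), of "\<lambda>i. lab G (t1 i) \<inter> H"] by blast
  obtain fL where fL: "is_strategy G fL"
    using strategy_exists[OF assms(2)] by blast
  define F where "F \<xi> = (case \<xi> of XiN \<Rightarrow> FN XiN | XiH \<Rightarrow> fH | XiL \<Rightarrow> fL)" for \<xi>
  have "\<forall>\<xi> \<in> UNIV. is_strategy G (F \<xi>)"
    using FN(1) fH fL by (auto simp: F_def split: agent.split)
  moreover have "glob_agree G H t1 t3 \<and> glob_agree G Ou t2 t3" if t3: "t3 \<in> out G s F UNIV" for t3
  proof
    have "lab G (t1 i) \<inter> H = lab G (t3 i) \<inter> H" for i
      using track[OF _ _ t3] out_start[OF t3] assms(3) by (cases i) (simp_all add: F_def)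
    then show "glob_agree G H t1 t3"
      by (simp add: glob_agree_iff_Int)
    have "out G s F UNIV \<subseteq> out G s FN {XiN}"
      by (rule out_antimono) (simp_all add: F_def)
    then show "glob_agree G Ou t2 t3"
      using FN(2) t3 by blast
  qed
  ultimately show ?thesis
    unfolding strat_q_def by blast
qed

theorem lemma4p1:
  fixes G :: "('s, 'm, 'a) mscgs" and H L Ou :: "'a set"
  assumes "is_system G H L Ou"
    and "input_total G H L"
    and "stratNI G Ou"
  shows "GNI G H Ou"
proof -
  fix F :: "agent \<Rightarrow> ('s, 'm) strat"
  have Mv: "Mv G \<noteq> {}"
    using assms(1) by (simp add: is_system_def wf_mscgs_def)
  have output_strategy: "strat_q G {XiN} (init G) (glob_agree G Ou t)" if "t \<in> out G (init G) F {}" for t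
    using assms(3) that out_start[OF that] unfolding stratNI_def all_path_iff[where F = F] by metis
  show ?thesis
    unfolding GNI_def all_path_iff[where F = F]
    by (metis out_start output_strategy ex_path_high_and_output_agreement[OF assms(2) Mv])
qed

end
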